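(* Let $S$ be a one-dimensional tiling substitution with expansion constant $\beta>1$ and with $\vec h\in(r\mathbb{Q}(\beta))^m$ for some $r>0$, and suppose $\beta$ is a Pisot number. Let $T$ be a central tile whose endpoints belong to $\mathbb{Q}(\beta)$. Then there exist $K,L\in\mathbb N$ such that $\bar S^{NL+K}(T)=\bar S^{K}(T)$ for all $N>0$.
   Context: A Pisot number is an algebraic integer $\beta>1$ all of whose Galois conjugates $\beta'\ne\beta$ satisfy $|\beta'|<1$. A one-dimensional tiling substitution is built as follows: $\sigma:\mathcal A\to\mathcal A^*$ is a substitution on $\mathcal A=\{1,\dots,m\}$ (with $\mathcal A^*$ the nonempty finite words), its structure matrix $M$ ($M_{i,j}$ = number of occurrences of $j$ in $\sigma(i)$) has real eigenvalue $\beta>1$ with right eigenvector $\vec h=(h_1,\dots,h_m)$ having strictly positive entries. Prototiles are $P_j=[0,h_j)$ with label $j$; a tile is a labeled translate $P_j+s=[s,s+h_j)$. For a word $\mathbf w=j_1\cdots j_n$, $\pi(s,\mathbf w)=(P_{j_1}+s_1,\dots,P_{j_n}+s_n)$ with $s_1=s$, $s_{i+1}=s_i+h_{j_i}$; the substitution is $S(P_j+s)=\pi(\beta s,\sigma(j))$. A central tile is a tile $[s,t)$ with $s\le0<t$, and $\bar S(T)$ is the unique tile of $S(T)$ containing $0$. Equality of tiles means equal intervals with equal labels. *)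

theory Defs
  imports Complex_Main "HOL-Computational_Algebra.Polynomial" "HOL-Computational_Algebra.Factorial_Ring"
begin

definition struct_matrix :: "('a \<Rightarrow> 'a list) \<Rightarrow> 'a \<Rightarrow> 'a \<Rightarrow> nat" where
  "struct_matrix \<sigma> i j = count_list (\<sigma> i) j"

text \<open>A tile P_j + s = [s, s + h_j) with label j is represented by the pair (s, j).\<close>
type_synonym 'a tile = "real \<times> 'a"

definition tile_interval :: "('a \<Rightarrow> real) \<Rightarrow> 'a tile \<Rightarrow> real set" where
  "tile_interval h T = {fst T ..< fst T + h (snd T)}"

fun tile_pi :: "('a \<Rightarrow> real) \<Rightarrow> real \<Rightarrow> 'a list \<Rightarrow> 'a tile list" where
  "tile_pi h s [] = []"
| "tile_pi h s (j # w) = (s, j) # tile_pi h (s + h j) w"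

definition tile_subst :: "('a \<Rightarrow> real) \<Rightarrow> real \<Rightarrow> ('a \<Rightarrow> 'a list) \<Rightarrow> 'a tile \<Rightarrow> 'a tile list" where
  "tile_subst h \<beta> \<sigma> T = tile_pi h (\<beta> * fst T) (\<sigma> (snd T))"

definition central_tile :: "('a \<Rightarrow> real) \<Rightarrow> 'a tile \<Rightarrow> bool" where
  "central_tile h T \<longleftrightarrow> fst T \<le> 0 \<and> 0 < fst T + h (snd T)"

definition Sbar :: "('a \<Rightarrow> real) \<Rightarrow> real \<Rightarrow> ('a \<Rightarrow> 'a list) \<Rightarrow> 'a tile \<Rightarrow> 'a tile" where
  "Sbar h \<beta> \<sigma> T = (THE T'. T' \<in> set (tile_subst h \<beta> \<sigma> T) \<and> 0 \<in> tile_interval h T')"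

text \<open>The field Q(beta) (beta is algebraic in our application).\<close>
definition Qfield :: "real \<Rightarrow> real set" where
  "Qfield \<beta> = {x. \<exists>p :: rat poly. x = poly (map_poly of_rat p) \<beta>}"

definition pisot :: "real \<Rightarrow> bool" where
  "pisot \<beta> \<longleftrightarrow> \<beta> > 1 \<and> (\<exists>p :: int poly. lead_coeff p = 1 \<and> irreducible p \<and>
      poly (map_poly of_int p) \<beta> = 0 \<and>
      (\<forall>z :: complex. poly (map_poly of_int p) z = 0 \<and> z \<noteq> complex_of_real \<beta> \<longrightarrow> cmod z < 1))"

end

theory Submission
  imports Defs "Berlekamp_Zassenhaus.Factorize_Int_Poly" "Berlekamp_Zassenhaus.Square_Free_Int_To_Square_Free_GFp"
begin

(* Write t_n = Sbar^n(T) and s_n = fst t_n. Every t_n is central, so |s_n| is at most the largest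
   tile length, and s_(n+1) = beta s_n + d_n with d_n the length of a prefix of some sigma(j).
   If h(label T) = r q, multiplying by q removes r: x_n = q s_n and all the digits q d_n lie in
   Q(beta). Represent x_n by a rational polynomial V_n, reduced modulo the minimal polynomial of
   beta and with a fixed denominator. At any other root z of the minimal polynomial the values
   V_n(z) satisfy V_(n+1)(z) = z V_n(z) + (one of finitely many numbers) with |z| < 1, so they stay
   bounded, and at beta they equal the bounded x_n. By Lagrange interpolation the coefficients of
   V_n are bounded, so only finitely many V_n, hence finitely many tiles t_n, occur; an orbit in a
   finite set is eventually periodic. *)

interpretation of_rat_poly_hom: map_poly_idom_hom "of_rat :: rat \<Rightarrow> 'a::field_char_0" ..

lemma central_tile_iff_mem: "central_tile h t \<longleftrightarrow> 0 \<in> tile_interval h t"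
  by (auto simp: central_tile_def tile_interval_def)

lemma tile_pi_memD:
  assumes "t \<in> set (tile_pi h s w)"
  shows "\<exists>k<length w. t = (s + sum_list (map h (take k w)), w ! k)"
  using assms
proof (induction w arbitrary: s)
  case (Cons j w)
  show ?case
  proof (cases "t = (s, j)")
    case True
    then show ?thesis by (intro exI[of _ 0]) auto
  next
    case False
    then obtain k where "k < length w" "t = (s + h j + sum_list (map h (take k w)), w ! k)"
      using Cons by auto
    then show ?thesis by (intro exI[of _ "Suc k"]) (auto simp: algebra_simps)
  qed
qed simp

lemma tile_pi_Union:
  assumes "\<And>j. 0 \<le> h j"
  shows "(\<Union>t\<in>set (tile_pi h s w). tile_interval h t) = {s..<s + sum_list (map h w)}"
proof (induction w arbitrary: s)
  case (Cons j w)
  have "0 \<le> sum_list (map h w)" by (rule sum_list_nonneg) (auto simp: assms)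
  have "(\<Union>t\<in>set (tile_pi h s (j # w)). tile_interval h t)
      = tile_interval h (s, j) \<union> (\<Union>t\<in>set (tile_pi h (s + h j) w). tile_interval h t)"
    by simp
  also have "\<dots> = {s..<s + h j} \<union> {s + h j..<s + h j + sum_list (map h w)}"
    by (simp only: Cons.IH) (simp add: tile_interval_def)
  also have "\<dots> = {s..<s + sum_list (map h (j # w))}"
    using assms[of j] \<open>0 \<le> sum_list (map h w)\<close> by (simp add: ivl_disj_un_two(3) add.assoc)
  finally show ?case .
qed simp

lemma tile_pi_unique:
  assumes "\<And>j. 0 \<le> h j"
    and "t \<in> set (tile_pi h s w)" "t' \<in> set (tile_pi h s w)"
    and "x \<in> tile_interval h t" "x \<in> tile_interval h t'"
  shows "t = t'"
  using assms(2-)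
proof (induction w arbitrary: s)
  case (Cons j w)
  have tail: "s + h j \<le> y" if "u \<in> set (tile_pi h (s + h j) w)" "y \<in> tile_interval h u" for u y
    using that tile_pi_Union[of h, OF assms(1), of "s + h j" w] by auto
  from Cons.prems show ?case
    by (auto simp: tile_interval_def dest: tail Cons.IH)
qed simp

definition prefix_lengths :: "('a \<Rightarrow> real) \<Rightarrow> ('a \<Rightarrow> 'a list) \<Rightarrow> real set" where
  "prefix_lengths h \<sigma> = {sum_list (map h (take k (\<sigma> j))) | j k. k < length (\<sigma> j)}"

lemma finite_prefix_lengths: "finite (prefix_lengths h (\<sigma> :: 'a::finite \<Rightarrow> 'a list))"
proof -
  have "prefix_lengths h \<sigma>
      = (\<lambda>(j, k). sum_list (map h (take k (\<sigma> j)))) ` (SIGMA j:UNIV. {..<length (\<sigma> j)})"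
    unfolding prefix_lengths_def by auto
  then show ?thesis by simp
qed

lemma Sbar_mem:
  assumes "\<And>j. 0 \<le> h j"
    and "0 \<in> {\<beta> * fst t..<\<beta> * fst t + sum_list (map h (\<sigma> (snd t)))}"
  shows "Sbar h \<beta> \<sigma> t \<in> set (tile_subst h \<beta> \<sigma> t) \<and>
    0 \<in> tile_interval h (Sbar h \<beta> \<sigma> t)"
proof -
  have "\<exists>!u. u \<in> set (tile_subst h \<beta> \<sigma> t) \<and> 0 \<in> tile_interval h u"
    using tile_pi_Union[of h, OF assms(1)] tile_pi_unique[of h, OF assms(1)] assms(2)
    unfolding tile_subst_def by blast
  then show ?thesis unfolding Sbar_def by (rule theI')
qed

lemma central_tile_Sbar:
  assumes "\<And>j. 0 \<le> h j" and "\<beta> > 0"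
    and "sum_list (map h (\<sigma> (snd t))) = \<beta> * h (snd t)" and "central_tile h t"
  shows "central_tile h (Sbar h \<beta> \<sigma> t)"
    and "fst (Sbar h \<beta> \<sigma> t) - \<beta> * fst t \<in> prefix_lengths h \<sigma>"
proof -
  have "0 \<in> {\<beta> * fst t..<\<beta> * fst t + sum_list (map h (\<sigma> (snd t)))}"
    using assms(2-4) by (auto simp: central_tile_def mult_nonneg_nonpos simp flip: distrib_left)
  from Sbar_mem[where h=h and \<beta>=\<beta> and \<sigma>=\<sigma> and t=t, OF assms(1) this]
  have "Sbar h \<beta> \<sigma> t \<in> set (tile_pi h (\<beta> * fst t) (\<sigma> (snd t)))"
    and "0 \<in> tile_interval h (Sbar h \<beta> \<sigma> t)"
    unfolding tile_subst_def by auto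
  then show "central_tile h (Sbar h \<beta> \<sigma> t)"
    and "fst (Sbar h \<beta> \<sigma> t) - \<beta> * fst t \<in> prefix_lengths h \<sigma>"
    unfolding central_tile_iff_mem prefix_lengths_def by (force dest: tile_pi_memD)+
qed

lemma central_tile_funpow_Sbar:
  assumes "\<And>j. 0 \<le> h j" and "\<beta> > 0"
    and "\<And>j. sum_list (map h (\<sigma> j)) = \<beta> * h j" and "central_tile h t"
  shows "central_tile h ((Sbar h \<beta> \<sigma> ^^ n) t)"
  by (induction n) (auto intro: central_tile_Sbar(1) assms)

lemma central_Sbar_orbit:
  fixes h :: "'a::finite \<Rightarrow> real"
  assumes "\<And>j. 0 \<le> h j" and "\<beta> > 0"
    and "\<And>j. sum_list (map h (\<sigma> j)) = \<beta> * h j" and "central_tile h T"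
  shows "\<bar>fst ((Sbar h \<beta> \<sigma> ^^ n) T)\<bar> \<le> (\<Sum>j\<in>UNIV. h j)"
    and "fst ((Sbar h \<beta> \<sigma> ^^ Suc n) T) - \<beta> * fst ((Sbar h \<beta> \<sigma> ^^ n) T) \<in> prefix_lengths h \<sigma>"
proof -
  have central: "central_tile h ((Sbar h \<beta> \<sigma> ^^ n) T)"
    by (rule central_tile_funpow_Sbar[OF assms])
  then have "\<bar>fst ((Sbar h \<beta> \<sigma> ^^ n) T)\<bar> \<le> h (snd ((Sbar h \<beta> \<sigma> ^^ n) T))"
    by (simp add: central_tile_def)
  also have "\<dots> \<le> (\<Sum>j\<in>UNIV. h j)" using assms(1) by (simp add: member_le_sum)
  finally show "\<bar>fst ((Sbar h \<beta> \<sigma> ^^ n) T)\<bar> \<le> (\<Sum>j\<in>UNIV. h j)" .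
  show "fst ((Sbar h \<beta> \<sigma> ^^ Suc n) T) - \<beta> * fst ((Sbar h \<beta> \<sigma> ^^ n) T) \<in> prefix_lengths h \<sigma>"
    using central_tile_Sbar(2)[where \<sigma>=\<sigma>, OF assms(1,2) assms(3) central] by simp
qed

lemma finite_range_tiles:
  fixes t :: "nat \<Rightarrow> 'a::finite tile"
  assumes "finite (range (\<lambda>n. fst (t n)))"
  shows "finite (range t)"
proof (rule finite_subset)
  show "range t \<subseteq> range (\<lambda>n. fst (t n)) \<times> UNIV" by (simp add: image_subset_iff mem_Times_iff)
qed (use assms in simp)

lemma sum_list_map_eq_sum_count_list:
  fixes f :: "'a::finite \<Rightarrow> 'b::comm_semiring_1"
  shows "sum_list (map f xs) = (\<Sum>y\<in>UNIV. of_nat (count_list xs y) * f y)"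
proof (induction xs)
  case (Cons x xs)
  have "(\<Sum>y\<in>UNIV. of_nat (count_list (x # xs) y) * f y)
      = (\<Sum>y\<in>UNIV. (if x = y then f y else 0) + of_nat (count_list xs y) * f y)"
    by (intro sum.cong) (auto simp: algebra_simps)
  also have "\<dots> = f x + (\<Sum>y\<in>UNIV. of_nat (count_list xs y) * f y)"
    by (simp add: sum.distrib)
  finally show ?case using Cons by simp
qed simp

lemma Qfield_zero: "0 \<in> Qfield \<beta>"
  unfolding Qfield_def by (auto intro: exI[of _ 0])

lemma Qfield_add: "x \<in> Qfield \<beta> \<Longrightarrow> y \<in> Qfield \<beta> \<Longrightarrow> x + y \<in> Qfield \<beta>"
  unfolding Qfield_def by (auto, metis of_rat_poly_hom.hom_add poly_add)

lemma Qfield_diff: "x \<in> Qfield \<beta> \<Longrightarrow> y \<in> Qfield \<beta> \<Longrightarrow> x - y \<in> Qfield \<beta>"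
  unfolding Qfield_def by (auto, metis of_rat_poly_hom.hom_minus poly_diff)

lemma Qfield_mult: "x \<in> Qfield \<beta> \<Longrightarrow> y \<in> Qfield \<beta> \<Longrightarrow> x * y \<in> Qfield \<beta>"
  unfolding Qfield_def by (auto, metis of_rat_poly_hom.hom_mult poly_mult)

lemma Qfield_scaled_sum_list:
  assumes "\<And>j. q * h j \<in> Qfield \<beta>"
  shows "q * sum_list (map h ws) \<in> Qfield \<beta>"
  using assms by (induction ws) (auto simp: distrib_left intro: Qfield_zero Qfield_add)

lemma scaled_prefix_lengths_in_Qfield:
  assumes "\<forall>j. \<exists>q \<in> Qfield \<beta>. h j = r * q"
    and "fst T \<in> Qfield \<beta>" "fst T + h (snd T) \<in> Qfield \<beta>"
    and "h (snd T) = r * q"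
  shows "(*) q ` prefix_lengths h \<sigma> \<subseteq> Qfield \<beta>"
proof -
  have "q * h j \<in> Qfield \<beta>" for j
  proof -
    obtain q' where "q' \<in> Qfield \<beta>" "h j = r * q'" using assms(1) by blast
    then have "q * h j = (fst T + h (snd T) - fst T) * q'" using assms(4) by simp
    then show ?thesis using Qfield_mult[OF Qfield_diff[OF assms(3,2)] \<open>q' \<in> Qfield \<beta>\<close>] by simp
  qed
  then show ?thesis unfolding prefix_lengths_def by (auto intro: Qfield_scaled_sum_list)
qed

lemma poly_map_of_rat_mod:
  fixes z :: "'a::field_char_0"
  assumes "poly (map_poly of_rat q) z = 0"
  shows "poly (map_poly of_rat (p mod q)) z = poly (map_poly of_rat p) z"
proof -
  have "poly (map_poly of_rat p) z = poly (map_poly of_rat (p div q * q + p mod q)) z" by simp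
  also have "\<dots> = poly (map_poly of_rat (p mod q)) z"
    using assms by (simp only: hom_distribs poly_add poly_mult) simp
  finally show ?thesis ..
qed

lemma Qfield_reduced_rep:
  assumes "x \<in> Qfield \<beta>" "poly (map_poly of_rat q) \<beta> = 0" "0 < degree q"
  obtains V where "degree V < degree q" "x = poly (map_poly of_rat V) \<beta>"
proof -
  obtain p where p: "x = poly (map_poly of_rat p) \<beta>" using assms(1) by (auto simp: Qfield_def)
  have "q \<noteq> 0" using assms(3) by auto
  show thesis
  proof
    show "degree (p mod q) < degree q" using degree_mod_less[OF \<open>q \<noteq> 0\<close>, of p] assms(3) by auto
    show "x = poly (map_poly of_rat (p mod q)) \<beta>" using p poly_map_of_rat_mod[OF assms(2)] by simp
  qed
qed

interpretation of_rat_complex_hom: field_hom_0' "of_rat :: rat \<Rightarrow> complex" by standard auto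

lemma card_roots_irreducible_int_poly:
  assumes "irreducible (p :: int poly)"
  shows "card {z::complex. poly (of_int_poly p) z = 0} = degree p"
proof -
  have "square_free (of_int_poly p :: rat poly)"
    by (rule square_free_int_rat[OF irreducible_imp_square_free[OF assms]])
  then have "square_free (map_poly (of_rat :: rat \<Rightarrow> complex) (of_int_poly p))"
    by (rule of_rat_complex_hom.square_free_map_poly[THEN iffD2])
  then have "rsquarefree (of_int_poly p :: complex poly)"
    by (simp add: map_poly_map_poly o_def square_free_rsquarefree)
  moreover have "(of_int_poly p :: complex poly) \<noteq> 0"
    using assms by auto
  ultimately show ?thesis using rsquarefree_card_degree by simp
qed

lemma pisot_minimal_polyE:
  assumes "pisot \<beta>"
  obtains q :: "rat poly"
  where "lead_coeff q = 1" "\<And>i. coeff q i \<in> \<int>" "0 < degree q"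
    and "poly (map_poly of_rat q) \<beta> = 0"
    and "card {z::complex. poly (map_poly of_rat q) z = 0} = degree q"
    and "\<And>z::complex. poly (map_poly of_rat q) z = 0 \<Longrightarrow> z \<noteq> of_real \<beta> \<Longrightarrow> cmod z < 1"
proof -
  from assms obtain p :: "int poly" where lc: "lead_coeff p = 1" and irr: "irreducible p"
    and root: "poly (of_int_poly p) \<beta> = 0"
    and conj: "\<forall>z::complex. poly (of_int_poly p) z = 0 \<and> z \<noteq> of_real \<beta> \<longrightarrow> cmod z < 1"
    unfolding pisot_def by blast
  have of_rat_of_int_poly: "map_poly of_rat (of_int_poly p :: rat poly) = (of_int_poly p :: 'b::field_char_0 poly)"
    by (simp add: map_poly_map_poly o_def)
  have "degree p \<noteq> 0"
  proof
    assume "degree p = 0"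
    then have "p = [:1:]" using lc degree_0_id[of p] by simp
    then show False using root by simp
  qed
  show thesis
  proof (rule that[of "of_int_poly p"])
    show "lead_coeff (of_int_poly p :: rat poly) = 1" "0 < degree (of_int_poly p :: rat poly)"
      using lc \<open>degree p \<noteq> 0\<close> by simp_all
    show "coeff (of_int_poly p) i \<in> \<int>" for i by (simp add: coeff_map_poly)
    show "poly (map_poly of_rat (of_int_poly p :: rat poly)) \<beta> = 0"
      using root by (simp only: of_rat_of_int_poly)
    show "card {z::complex. poly (map_poly of_rat (of_int_poly p :: rat poly)) z = 0}
        = degree (of_int_poly p :: rat poly)"
      using card_roots_irreducible_int_poly[OF irr] by (simp add: of_rat_of_int_poly)
    show "cmod z < 1" if "poly (map_poly of_rat (of_int_poly p :: rat poly)) z = 0" "z \<noteq> of_real \<beta>"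
      for z :: complex
      using conj that by (simp only: of_rat_of_int_poly) blast
  qed
qed

text \<open>For monic \<open>q\<close> and \<open>degree W < degree q\<close> this is \<open>X * W mod q\<close>.\<close>
definition mult_X_mod :: "'a::comm_ring_1 poly \<Rightarrow> 'a poly \<Rightarrow> 'a poly" where
  "mult_X_mod q W = pCons 0 W - Polynomial.smult (coeff W (degree q - 1)) q"

lemma degree_mult_X_mod:
  assumes "lead_coeff q = 1" "degree W < degree q"
  shows "degree (mult_X_mod q W) < degree q"
proof -
  have "coeff (mult_X_mod q W) i = 0" if "degree q \<le> i" for i
  proof (cases "i = degree q")
    case True
    from assms(2) obtain n where "degree q = Suc n" by (cases "degree q") auto
    then show ?thesis using assms(1) True by (simp add: mult_X_mod_def)
  next
    case False
    then show ?thesis using assms that by (cases i) (auto simp: mult_X_mod_def coeff_eq_0)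
  qed
  then have "degree (mult_X_mod q W) \<le> degree q - 1"
    using assms(2) by (intro degree_le) auto
  then show ?thesis using assms(2) by linarith
qed

lemma poly_mult_X_mod:
  fixes z :: "'a::field_char_0"
  assumes "poly (map_poly of_rat q) z = 0"
  shows "poly (map_poly of_rat (mult_X_mod q W)) z = z * poly (map_poly of_rat W) z"
  using assms by (simp add: mult_X_mod_def hom_distribs map_poly_pCons)

lemma denominator_mult_X_mod:
  assumes "\<And>i. coeff q i \<in> \<int>" "\<And>i. of_nat d * coeff W i \<in> \<int>"
  shows "of_nat d * coeff (mult_X_mod q W) i \<in> \<int>"
proof -
  have "of_nat d * coeff (mult_X_mod q W) i
      = of_nat d * coeff (pCons 0 W) i - of_nat d * coeff W (degree q - 1) * coeff q i"
    by (simp add: mult_X_mod_def algebra_simps)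
  moreover have "of_nat d * coeff (pCons 0 W) i \<in> \<int>"
    using assms(2) by (cases i) auto
  ultimately show ?thesis using assms by (simp add: Ints_diff Ints_mult)
qed

definition lagrange_basis :: "'a::field set \<Rightarrow> 'a \<Rightarrow> 'a poly" where
  "lagrange_basis Z z = Polynomial.smult (inverse (\<Prod>w\<in>Z-{z}. z - w)) (\<Prod>w\<in>Z-{z}. [:-w, 1:])"

lemma poly_lagrange_basis:
  assumes "finite Z" "z \<in> Z" "y \<in> Z"
  shows "poly (lagrange_basis Z z) y = (if y = z then 1 else 0)"
proof (cases "y = z")
  case True
  have "(\<Prod>w\<in>Z-{z}. z - w) \<noteq> 0" using assms(1) by (subst prod_zero_iff) auto
  then show ?thesis using True by (simp add: lagrange_basis_def poly_prod)
next
  case False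
  have "(\<Prod>w\<in>Z-{z}. y - w) = 0" using assms False by (subst prod_zero_iff) auto
  then show ?thesis using False by (simp add: lagrange_basis_def poly_prod)
qed

lemma degree_lagrange_basis:
  assumes "finite Z" "z \<in> Z"
  shows "degree (lagrange_basis Z z) < card Z"
proof -
  have "degree (lagrange_basis Z z) \<le> degree (\<Prod>w\<in>Z-{z}. [:-w, 1:])"
    unfolding lagrange_basis_def by (rule degree_smult_le)
  also have "\<dots> \<le> (\<Sum>w\<in>Z-{z}. degree [:-w, 1:])"
    using degree_prod_sum_le[of "Z-{z}" "\<lambda>w. [:-w, 1:]"] assms(1) by (simp add: o_def)
  also have "\<dots> = card Z - 1"
    using assms by simp
  also have "\<dots> < card Z"
    using assms card_gt_0_iff[of Z] by auto
  finally show ?thesis .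
qed

lemma lagrange_interpolation:
  assumes "finite Z" "degree W < card Z"
  shows "W = (\<Sum>z\<in>Z. Polynomial.smult (poly W z) (lagrange_basis Z z))"
proof (rule poly_eqI_degree[of Z])
  fix y assume "y \<in> Z"
  then have "poly (\<Sum>z\<in>Z. Polynomial.smult (poly W z) (lagrange_basis Z z)) y
      = (\<Sum>z\<in>Z. poly W z * (if y = z then 1 else 0))"
    using assms(1) by (auto simp: poly_sum poly_lagrange_basis intro: sum.cong)
  also have "\<dots> = (\<Sum>z\<in>Z. if y = z then poly W z else 0)"
    by (intro sum.cong) auto
  also have "\<dots> = poly W y" using \<open>y \<in> Z\<close> assms(1) by simp
  finally show "poly W y = poly (\<Sum>z\<in>Z. Polynomial.smult (poly W z) (lagrange_basis Z z)) y" ..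
next
  show "degree (\<Sum>z\<in>Z. Polynomial.smult (poly W z) (lagrange_basis Z z)) < card Z"
    using assms by (intro degree_sum_less le_less_trans[OF degree_smult_le] degree_lagrange_basis) auto
qed (use assms in auto)

lemma norm_coeff_le_sum: "norm (coeff p k) \<le> (\<Sum>i\<le>degree p. norm (coeff p i))"
  by (cases "k \<le> degree p") (auto intro: member_le_sum sum_nonneg simp: coeff_eq_0)

lemma coeff_bounded_by_values:
  fixes Z :: "'a::real_normed_field set"
  assumes "finite Z"
  obtains C where "\<And>W B k. degree W < card Z \<Longrightarrow> (\<And>z. z \<in> Z \<Longrightarrow> norm (poly W z) \<le> B)
    \<Longrightarrow> norm (coeff W k) \<le> C * B"
proof -
  define c where "c z = (\<Sum>i\<le>degree (lagrange_basis Z z). norm (coeff (lagrange_basis Z z) i))" for z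
  have "norm (coeff W k) \<le> (\<Sum>z\<in>Z. c z) * B"
    if deg: "degree W < card Z" and bound: "\<And>z. z \<in> Z \<Longrightarrow> norm (poly W z) \<le> B" for W B k
  proof -
    have "Z \<noteq> {}" using deg by auto
    then have "0 \<le> B" using bound by (meson all_not_in_conv norm_ge_zero order_trans)
    have "coeff W k = coeff (\<Sum>z\<in>Z. Polynomial.smult (poly W z) (lagrange_basis Z z)) k"
      using lagrange_interpolation[OF assms deg] by (rule arg_cong[where f="\<lambda>p. coeff p k"])
    then have "norm (coeff W k) = norm (\<Sum>z\<in>Z. poly W z * coeff (lagrange_basis Z z) k)"
      by (simp add: coeff_sum)
    also have "\<dots> \<le> (\<Sum>z\<in>Z. norm (poly W z) * norm (coeff (lagrange_basis Z z) k))"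
      by (rule norm_sum[THEN order_trans]) (simp add: norm_mult)
    also have "\<dots> \<le> (\<Sum>z\<in>Z. B * c z)"
      unfolding c_def by (intro sum_mono mult_mono bound norm_coeff_le_sum) (auto simp: \<open>0 \<le> B\<close>)
    also have "\<dots> = (\<Sum>z\<in>Z. c z) * B" by (simp add: sum_distrib_left mult.commute)
    finally show ?thesis .
  qed
  then show thesis by (rule that)
qed

lemma finite_rat_polys_bounded:
  assumes "d > 0"
  shows "finite {V::rat poly. degree V < N \<and> (\<forall>i. of_nat d * coeff V i \<in> \<int>)
    \<and> (\<forall>i. \<bar>real_of_rat (coeff V i)\<bar> \<le> c)}" (is "finite ?S")
proof -
  define A where "A = {x::rat. of_nat d * x \<in> \<int> \<and> \<bar>real_of_rat x\<bar> \<le> c}"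
  define K where "K = \<lceil>real d * c\<rceil>"
  have "A \<subseteq> (\<lambda>k. of_int k / of_nat d) ` {-K..K}"
  proof
    fix x assume "x \<in> A"
    then obtain k where k: "of_nat d * x = of_int k" and "\<bar>real_of_rat x\<bar> \<le> c"
      unfolding A_def by (auto elim: Ints_cases)
    moreover have "real_of_int k = real d * real_of_rat x"
      using arg_cong[OF k, of real_of_rat] by (simp add: of_rat_mult)
    ultimately have "\<bar>real_of_int k\<bar> \<le> real d * c"
      by (simp add: abs_mult mult_left_mono)
    then have "k \<in> {-K..K}" unfolding K_def by (auto simp: abs_le_iff) linarith+
    moreover have "x = of_int k / of_nat d" using k assms by (simp add: field_simps)
    ultimately show "x \<in> (\<lambda>k. of_int k / of_nat d) ` {-K..K}" by blast
  qed
  then have "finite A" by (rule finite_subset) simp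
  have "?S \<subseteq> Poly ` {xs. set xs \<subseteq> A \<and> length xs \<le> N}"
  proof
    fix V assume V: "V \<in> ?S"
    have "set (coeffs V) \<subseteq> range (coeff V)" by (auto simp: range_coeff)
    then have "set (coeffs V) \<subseteq> A" using V by (fastforce simp: A_def)
    moreover have "length (coeffs V) \<le> N" using V by (cases "V = 0") (auto simp: length_coeffs)
    ultimately show "V \<in> Poly ` {xs. set xs \<subseteq> A \<and> length xs \<le> N}"
      by (intro image_eqI[of _ _ "coeffs V"]) auto
  qed
  then show ?thesis by (rule finite_surj[OF finite_lists_length_le[OF \<open>finite A\<close>]])
qed

lemma common_denominator:
  fixes S :: "rat poly set"
  assumes "finite S"
  obtains d :: nat where "d > 0" "\<And>V i. V \<in> S \<Longrightarrow> of_nat d * coeff V i \<in> \<int>"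
proof -
  define Q where "Q = (\<Union>V\<in>S. set (coeffs V))"
  define den where "den x = nat (snd (quotient_of x))" for x :: rat
  have den: "den x > 0 \<and> of_nat (den x) * x \<in> \<int>" for x
  proof -
    obtain a b where ab: "quotient_of x = (a, b)" by force
    have "b > 0" using quotient_of_denom_pos[OF ab] .
    have "of_nat (nat b) * x = of_int a" using quotient_of_div[OF ab] \<open>b > 0\<close> by simp
    then show ?thesis using \<open>b > 0\<close> by (simp add: den_def ab)
  qed
  show thesis
  proof (rule that[of "\<Prod>x\<in>Q. den x"])
    show "0 < (\<Prod>x\<in>Q. den x)" using den by (simp add: prod_pos)
    fix V i assume "V \<in> S"
    show "of_nat (\<Prod>x\<in>Q. den x) * coeff V i \<in> \<int>"
    proof (cases "coeff V i \<in> Q")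
      case True
      have "finite Q" unfolding Q_def using assms by simp
      then have "(\<Prod>x\<in>Q. den x) = den (coeff V i) * (\<Prod>x\<in>Q-{coeff V i}. den x)"
        using True by (rule prod.remove)
      then have "of_nat (\<Prod>x\<in>Q. den x) * coeff V i
          = of_nat (\<Prod>x\<in>Q-{coeff V i}. den x) * (of_nat (den (coeff V i)) * coeff V i)"
        by (simp add: algebra_simps)
      moreover have "of_nat (den (coeff V i)) * coeff V i \<in> \<int>" using den by blast
      ultimately show ?thesis by (metis Ints_mult Ints_of_nat)
    next
      case False
      have "coeff V i \<in> insert 0 (set (coeffs V))" by (simp flip: range_coeff)
      then have "coeff V i = 0" using False \<open>V \<in> S\<close> unfolding Q_def by blast
      then show ?thesis by simp
    qed
  qed
qed

lemma complex_of_real_of_rat: "complex_of_real (of_rat q) = of_rat q"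
  by (induction q) (simp add: of_rat_rat)

lemma cmod_of_rat: "cmod (of_rat q) = \<bar>real_of_rat q\<bar>"
  by (simp flip: complex_of_real_of_rat)

lemma poly_map_of_rat_of_real:
  "poly (map_poly of_rat W) (complex_of_real x) = complex_of_real (poly (map_poly of_rat W) x)"
  by (simp add: map_poly_map_poly o_def complex_of_real_of_rat of_real_hom.poly_map_poly[symmetric])

lemma finite_rat_polys_bounded_on:
  fixes Z :: "complex set"
  assumes "finite Z" "d > 0"
  shows "finite {V::rat poly. degree V < card Z \<and> (\<forall>i. of_nat d * coeff V i \<in> \<int>)
    \<and> (\<forall>z\<in>Z. cmod (poly (map_poly of_rat V) z) \<le> B)}"
proof -
  obtain C where C: "\<And>W B k. degree W < card Z \<Longrightarrow> (\<And>z. z \<in> Z \<Longrightarrow> cmod (poly W z) \<le> B)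
    \<Longrightarrow> cmod (coeff W k) \<le> C * B"
    using coeff_bounded_by_values[OF assms(1)] by blast
  have "\<bar>real_of_rat (coeff V i)\<bar> \<le> C * B"
    if "degree V < card Z" "\<forall>z\<in>Z. cmod (poly (map_poly of_rat V) z) \<le> B" for V i
    using C[of "map_poly of_rat V"] that by (simp add: coeff_map_poly cmod_of_rat)
  then show ?thesis
    by (intro finite_subset[OF _ finite_rat_polys_bounded[OF assms(2), of "card Z" "C * B"]]) auto
qed

lemma contraction_recurrence_bounded:
  fixes u :: "nat \<Rightarrow> real"
  assumes "0 \<le> a" "a < 1" "\<And>n. u (Suc n) \<le> a * u n + M"
  shows "u n \<le> max (u 0) (M / (1 - a))"
proof (induction n)
  case (Suc n)
  define b where "b = max (u 0) (M / (1 - a))"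
  have "M = (1 - a) * (M / (1 - a))" using assms(2) by simp
  also have "\<dots> \<le> (1 - a) * b" using assms(2) by (intro mult_left_mono) (auto simp: b_def)
  finally have "M \<le> (1 - a) * b" .
  moreover have "a * u n \<le> a * b" using Suc assms(1) by (simp add: b_def mult_left_mono)
  ultimately show ?case using assms(3)[of n] by (simp add: b_def algebra_simps)
qed simp

lemma Qfield_orbit_polys:
  fixes x :: "nat \<Rightarrow> real" and q :: "rat poly"
  assumes q: "lead_coeff q = 1" "\<And>i. coeff q i \<in> \<int>" "0 < degree q" "poly (map_poly of_rat q) \<beta> = 0"
    and D: "finite D" "D \<subseteq> Qfield \<beta>"
    and x: "x 0 \<in> Qfield \<beta>" "\<And>n. x (Suc n) - \<beta> * x n \<in> D"
  obtains V :: "nat \<Rightarrow> rat poly" and E :: "rat poly set" and d :: nat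
  where "finite E" "d > 0"
    and "\<And>n. degree (V n) < degree q" "\<And>n i. of_nat d * coeff (V n) i \<in> \<int>"
    and "\<And>n. poly (map_poly of_rat (V n)) \<beta> = x n"
    and "\<And>n. \<exists>e\<in>E. V (Suc n) = mult_X_mod q (V n) + e"
proof -
  have "\<exists>W. degree W < degree q \<and> y = poly (map_poly of_rat W) \<beta>" if "y \<in> insert (x 0) D" for y
    using Qfield_reduced_rep[OF _ q(4,3)] that D(2) x(1) by blast
  then obtain R where R: "\<And>y. y \<in> insert (x 0) D
      \<Longrightarrow> degree (R y) < degree q \<and> y = poly (map_poly of_rat (R y)) \<beta>"
    by metis
  define E where "E = R ` D"
  obtain d where d: "d > 0" "\<And>W i. W \<in> insert (R (x 0)) E \<Longrightarrow> of_nat d * coeff W i \<in> \<int>"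
    using common_denominator[of "insert (R (x 0)) E"] D(1) by (auto simp: E_def)
  define V where "V = rec_nat (R (x 0)) (\<lambda>n W. mult_X_mod q W + R (x (Suc n) - \<beta> * x n))"
  have V_0: "V 0 = R (x 0)" and V_Suc: "V (Suc n) = mult_X_mod q (V n) + R (x (Suc n) - \<beta> * x n)" for n
    by (simp_all add: V_def)
  show thesis
  proof (rule that[of E d V])
    show "finite E" using D(1) by (simp add: E_def)
    show "\<exists>e\<in>E. V (Suc n) = mult_X_mod q (V n) + e" for n
      using x(2) by (auto simp: V_Suc E_def)
    show "degree (V n) < degree q" for n
    proof (induction n)
      case (Suc n)
      then show ?case
        using degree_mult_X_mod[OF q(1) Suc] R[of "x (Suc n) - \<beta> * x n"] x(2)
        by (simp add: V_Suc degree_add_less)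
    qed (use R in \<open>simp add: V_0\<close>)
    show "of_nat d * coeff (V n) i \<in> \<int>" for n i
    proof (induction n arbitrary: i)
      case (Suc n)
      have "of_nat d * coeff (R (x (Suc n) - \<beta> * x n)) i \<in> \<int>"
        using d(2) x(2) by (simp add: E_def)
      then show ?case
        using denominator_mult_X_mod[OF q(2) Suc] by (simp add: V_Suc distrib_left Ints_add)
    qed (use d in \<open>simp add: V_0\<close>)
    show "poly (map_poly of_rat (V n)) \<beta> = x n" for n
    proof (induction n)
      case (Suc n)
      then show ?case
        using R[of "x (Suc n) - \<beta> * x n"] x(2)
        by (simp add: V_Suc hom_distribs poly_mult_X_mod[OF q(4)])
    qed (use R in \<open>simp add: V_0\<close>)
  qed (use d in simp)
qed

lemma conjugate_orbit_bounded:
  fixes z :: complex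
  assumes "cmod z < 1" "poly (map_poly of_rat q) z = 0" "finite E"
    and "\<And>n. \<exists>e\<in>E. V (Suc n) = mult_X_mod q (V n) + e"
  shows "\<exists>b. \<forall>n. cmod (poly (map_poly of_rat (V n)) z) \<le> b"
proof -
  define M where "M = (\<Sum>e\<in>E. cmod (poly (map_poly of_rat e) z))"
  have "cmod (poly (map_poly of_rat (V (Suc n))) z)
      \<le> cmod z * cmod (poly (map_poly of_rat (V n)) z) + M" for n
  proof -
    obtain e where "e \<in> E" "V (Suc n) = mult_X_mod q (V n) + e" using assms(4) by blast
    then have "poly (map_poly of_rat (V (Suc n))) z
        = z * poly (map_poly of_rat (V n)) z + poly (map_poly of_rat e) z"
      by (simp add: hom_distribs poly_mult_X_mod[OF assms(2)])
    then have "cmod (poly (map_poly of_rat (V (Suc n))) z)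
        \<le> cmod z * cmod (poly (map_poly of_rat (V n)) z) + cmod (poly (map_poly of_rat e) z)"
      by (metis norm_mult norm_triangle_ineq)
    moreover have "cmod (poly (map_poly of_rat e) z) \<le> M"
      unfolding M_def using \<open>e \<in> E\<close> assms(3) by (intro member_le_sum) auto
    ultimately show ?thesis by linarith
  qed
  then have "cmod (poly (map_poly of_rat (V n)) z)
      \<le> max (cmod (poly (map_poly of_rat (V 0)) z)) (M / (1 - cmod z))" for n
    by (rule contraction_recurrence_bounded[OF norm_ge_zero assms(1)])
  then show ?thesis by blast
qed

lemma pisot_bounded_orbit_finite:
  fixes x :: "nat \<Rightarrow> real"
  assumes "pisot \<beta>" "finite D" "D \<subseteq> Qfield \<beta>" "x 0 \<in> Qfield \<beta>"
    and "\<And>n. x (Suc n) - \<beta> * x n \<in> D" and "\<And>n. \<bar>x n\<bar> \<le> B"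
  shows "finite (range x)"
proof -
  obtain q where q: "lead_coeff q = 1" "\<And>i. coeff q i \<in> \<int>" "0 < degree q"
      "poly (map_poly of_rat q) \<beta> = 0"
    and card: "card {z::complex. poly (map_poly of_rat q) z = 0} = degree q"
    and conj: "\<And>z::complex. poly (map_poly of_rat q) z = 0 \<Longrightarrow> z \<noteq> of_real \<beta>
      \<Longrightarrow> cmod z < 1"
    using pisot_minimal_polyE[OF assms(1)] by metis
  obtain E d V where "finite E" "d > 0"
    and deg: "\<And>n. degree (V n) < degree q" and den: "\<And>n i. of_nat d * coeff (V n) i \<in> \<int>"
    and val: "\<And>n. poly (map_poly of_rat (V n)) \<beta> = x n"
    and step: "\<And>n. \<exists>e\<in>E. V (Suc n) = mult_X_mod q (V n) + e"
    using Qfield_orbit_polys[OF q assms(2-5)] by metis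
  define Z where "Z = {z::complex. poly (map_poly of_rat q) z = 0}"
  have "finite Z" unfolding Z_def using q(3) by (intro poly_roots_finite) auto
  have "\<exists>b. \<forall>n. cmod (poly (map_poly of_rat (V n)) z) \<le> b" if "z \<in> Z" for z
  proof (cases "z = of_real \<beta>")
    case True
    then have "cmod (poly (map_poly of_rat (V n)) z) = \<bar>x n\<bar>" for n
      using val[of n] by (simp add: poly_map_of_rat_of_real)
    then show ?thesis using assms(6) by metis
  next
    case False
    then show ?thesis
      using that conj \<open>finite E\<close> step by (intro conjugate_orbit_bounded) (auto simp: Z_def)
  qed
  then obtain b where b: "\<And>z n. z \<in> Z \<Longrightarrow> cmod (poly (map_poly of_rat (V n)) z) \<le> b z"
    by metis
  define B' where "B' = (\<Sum>z\<in>Z. \<bar>b z\<bar>)"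
  have "cmod (poly (map_poly of_rat (V n)) z) \<le> B'" if "z \<in> Z" for z n
    using b[OF that, of n] abs_ge_self[of "b z"] member_le_sum[of z Z "\<lambda>z. \<bar>b z\<bar>"]
      that \<open>finite Z\<close> unfolding B'_def by fastforce
  moreover have "card Z = degree q" using card by (simp add: Z_def)
  ultimately have "range V \<subseteq> {W. degree W < card Z \<and> (\<forall>i. of_nat d * coeff W i \<in> \<int>)
      \<and> (\<forall>z\<in>Z. cmod (poly (map_poly of_rat W) z) \<le> B')}"
    using deg den by auto
  then have "finite (range V)"
    by (rule finite_subset) (rule finite_rat_polys_bounded_on[OF \<open>finite Z\<close> \<open>d > 0\<close>])
  moreover have "range x = (\<lambda>W. poly (map_poly of_rat W) \<beta>) ` range V"
    using val by (simp add: image_image)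
  ultimately show ?thesis by simp
qed

lemma funpow_eventually_periodic:
  fixes f :: "'a \<Rightarrow> 'a"
  assumes "finite (range (\<lambda>n. (f ^^ n) x))"
  shows "\<exists>K L :: nat. L > 0 \<and> (\<forall>N::nat. N > 0 \<longrightarrow> (f ^^ (N * L + K)) x = (f ^^ K) x)"
proof -
  have "\<not> inj (\<lambda>n. (f ^^ n) x)"
    using assms finite_imageD infinite_UNIV_nat by blast
  then obtain a b where "a \<noteq> b" "(f ^^ a) x = (f ^^ b) x" unfolding inj_def by blast
  then obtain a b where "a < b" and ab: "(f ^^ a) x = (f ^^ b) x"
    by (metis linorder_neqE_nat)
  have "(f ^^ (m * (b - a) + a)) x = (f ^^ a) x" for m
  proof (induction m)
    case (Suc m)
    have "Suc m * (b - a) + a = m * (b - a) + b" using \<open>a < b\<close> by simp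
    then have "(f ^^ (Suc m * (b - a) + a)) x = (f ^^ (m * (b - a))) ((f ^^ b) x)"
      by (simp only: funpow_add o_apply)
    also have "\<dots> = (f ^^ (m * (b - a) + a)) x"
      by (simp add: funpow_add flip: ab)
    finally show ?case using Suc by simp
  qed simp
  then show ?thesis using \<open>a < b\<close> by (intro exI[of _ a] exI[of _ "b - a"]) simp
qed

theorem mainTheorem3:
  fixes \<sigma> :: "'a::finite \<Rightarrow> 'a list" and h :: "'a \<Rightarrow> real"
    and \<beta> r :: real and T :: "'a tile"
  assumes nonempty: "\<forall>j. \<sigma> j \<noteq> []"
    and beta_gt1: "\<beta> > 1"
    and h_pos: "\<forall>j. h j > 0"
    and eigen: "\<forall>i. (\<Sum>j\<in>UNIV. real (struct_matrix \<sigma> i j) * h j) = \<beta> * h i"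
    and r_pos: "r > 0"
    and h_in: "\<forall>j. \<exists>q \<in> Qfield \<beta>. h j = r * q"
    and pis: "pisot \<beta>"
    and central: "central_tile h T"
    and left_end: "fst T \<in> Qfield \<beta>"
    and right_end: "fst T + h (snd T) \<in> Qfield \<beta>"
  shows "\<exists>K L :: nat. L > 0 \<and>
           (\<forall>N::nat. N > 0 \<longrightarrow> (Sbar h \<beta> \<sigma> ^^ (N * L + K)) T = (Sbar h \<beta> \<sigma> ^^ K) T)"
proof -
  define t where "t n = (Sbar h \<beta> \<sigma> ^^ n) T" for n
  have lengths: "\<And>j. sum_list (map h (\<sigma> j)) = \<beta> * h j"
    using eigen by (simp add: sum_list_map_eq_sum_count_list struct_matrix_def)
  have h_nonneg: "\<And>j. 0 \<le> h j" using h_pos by (simp add: less_imp_le)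
  have beta_pos: "\<beta> > 0" using beta_gt1 by simp
  note orbit = central_Sbar_orbit[OF h_nonneg beta_pos lengths central, folded t_def]
  obtain q where q: "q \<in> Qfield \<beta>" "h (snd T) = r * q" using h_in by blast
  have "finite (range (\<lambda>n. q * fst (t n)))"
  proof (rule pisot_bounded_orbit_finite[OF pis])
    show "finite ((*) q ` prefix_lengths h \<sigma>)" by (simp add: finite_prefix_lengths)
    show "(*) q ` prefix_lengths h \<sigma> \<subseteq> Qfield \<beta>"
      by (rule scaled_prefix_lengths_in_Qfield[OF h_in left_end right_end q(2)])
    show "q * fst (t 0) \<in> Qfield \<beta>" using Qfield_mult[OF q(1) left_end] by (simp add: t_def)
    show "q * fst (t (Suc n)) - \<beta> * (q * fst (t n)) \<in> (*) q ` prefix_lengths h \<sigma>" for n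
      using imageI[where f="(*) q", OF orbit(2)[of n]] by (simp add: algebra_simps)
    show "\<bar>q * fst (t n)\<bar> \<le> \<bar>q\<bar> * (\<Sum>j\<in>UNIV. h j)" for n
      using orbit(1)[of n] by (simp add: abs_mult mult_left_mono)
  qed
  moreover have "q \<noteq> 0" using q(2) h_pos[rule_format, of "snd T"] by auto
  then have "range (\<lambda>n. fst (t n)) = (\<lambda>y. y / q) ` range (\<lambda>n. q * fst (t n))"
    by (simp add: image_image)
  ultimately have "finite (range t)" by (intro finite_range_tiles) simp
  then show ?thesis unfolding t_def by (rule funpow_eventually_periodic)
qed

end
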